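(* For every formula $\varphi$ of propositional linear temporal logic, $\mathrm{LTL} \models \neg \Box (\varphi\leftrightarrow\bigcirc\Box\neg\varphi)$.
   Context: Propositional linear temporal logic (LTL): formulas are built from propositional constants and $\textbf{false}$ with $\rightarrow$, the "next" modality $\bigcirc$ and the "always" modality $\Box$; $\neg,\vee,\wedge,\leftrightarrow,\textbf{true}$ are as usual and $\diamondsuit\varphi \equiv \neg\Box\neg\varphi$. A temporal (Kripke) structure is an infinite sequence $\mathcal{K}=(\eta_0,\eta_1,\dots)$ of valuations; $\mathcal{K}_i(\bigcirc\varphi)=\mathcal{K}_{i+1}(\varphi)$ and $\mathcal{K}_i(\Box\varphi)=\mathfrak{tt}$ iff $\mathcal{K}_j(\varphi)=\mathfrak{tt}$ for all $j\ge i$. $\mathrm{LTL}\models\varphi$ means $\varphi$ is true at every state of every temporal structure. Here $\bigcirc$ denotes the LTL "next" operator. *)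

theory Defs
  imports Main
begin

datatype 'v ltl =
    Prop 'v
  | FalseF
  | Imp "'v ltl" "'v ltl"
  | Next "'v ltl"
  | Always "'v ltl"

definition NotF :: "'v ltl \<Rightarrow> 'v ltl" where
  "NotF \<phi> = Imp \<phi> FalseF"

definition AndF :: "'v ltl \<Rightarrow> 'v ltl \<Rightarrow> 'v ltl" where
  "AndF \<phi> \<psi> = NotF (Imp \<phi> (NotF \<psi>))"

definition IffF :: "'v ltl \<Rightarrow> 'v ltl \<Rightarrow> 'v ltl" where
  "IffF \<phi> \<psi> = AndF (Imp \<phi> \<psi>) (Imp \<psi> \<phi>)"

type_synonym 'v kripke = "nat \<Rightarrow> 'v \<Rightarrow> bool"

fun holds :: "'v kripke \<Rightarrow> nat \<Rightarrow> 'v ltl \<Rightarrow> bool" where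
  "holds K i (Prop v) = K i v"
| "holds K i FalseF = False"
| "holds K i (Imp \<phi> \<psi>) = (holds K i \<phi> \<longrightarrow> holds K i \<psi>)"
| "holds K i (Next \<phi>) = holds K (Suc i) \<phi>"
| "holds K i (Always \<phi>) = (\<forall>j\<ge>i. holds K j \<phi>)"

definition ltl_valid :: "'v ltl \<Rightarrow> bool" where
  "ltl_valid \<phi> = (\<forall>K i. holds K i \<phi>)"

end

theory Submission
  imports Defs
begin

text \<open>If \<open>\<phi>\<close> held exactly when it never holds afterwards, then either \<open>\<phi>\<close> holds at some point
  \<open>j\<close>, so it fails from \<open>j + 1\<close> on, which forces it to hold at \<open>j + 1\<close>; or it never holds,
  which forces it to hold at once. Both are contradictory.\<close>

lemma holds_NotF [simp]: "holds K i (NotF \<phi>) \<longleftrightarrow> \<not> holds K i \<phi>"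
  by (simp add: NotF_def)

lemma holds_AndF [simp]: "holds K i (AndF \<phi> \<psi>) \<longleftrightarrow> holds K i \<phi> \<and> holds K i \<psi>"
  by (simp add: AndF_def)

lemma holds_IffF [simp]: "holds K i (IffF \<phi> \<psi>) \<longleftrightarrow> (holds K i \<phi> \<longleftrightarrow> holds K i \<psi>)"
  by (auto simp: IffF_def)

lemma not_always_iff_never_after:
  fixes P :: "nat \<Rightarrow> bool"
  shows "\<not> (\<forall>j\<ge>i. P j \<longleftrightarrow> (\<forall>k\<ge>Suc j. \<not> P k))"
proof
  assume fix_point: "\<forall>j\<ge>i. P j \<longleftrightarrow> (\<forall>k\<ge>Suc j. \<not> P k)"
  show False
  proof (cases "\<exists>j\<ge>i. P j")
    case True
    then obtain j where "j \<ge> i" "P j" by blast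
    then have never_after: "\<forall>k\<ge>Suc j. \<not> P k" using fix_point by blast
    then have "P (Suc j)" using fix_point \<open>j \<ge> i\<close> by auto
    then show False using never_after by blast
  next
    case False
    then have "P i" using fix_point by auto
    then show False using False by blast
  qed
qed

theorem mainTheorem1:
  fixes \<phi> :: "'v ltl"
  shows "ltl_valid (NotF (Always (IffF \<phi> (Next (Always (NotF \<phi>))))))"
  unfolding ltl_valid_def
  using not_always_iff_never_after[where P = "\<lambda>j. holds _ j \<phi>"] by simp

end
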